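(* Let $L_A$ and $L_B$ be two orderings (lists) of the same set $\mathbb{E}$ of $n$ elements, let $e\in\mathbb{E}$ have position $x$ in $L_A$, and let $y\ge 1$ be an integer such that the position of $e$ in $L_B$ is at most $y$. Let $\phi$ denote the number of inversions between $L_A$ and $L_B$ (ordered pairs $(i,j)$ with $i$ before $j$ in $L_A$ and after $j$ in $L_B$), and let $\Delta\phi$ be the change in $\phi$ when $e$ is moved to the front of $L_A$ (keeping the relative order of the other elements) while $L_B$ is unchanged. Then $$3x+4\Delta\phi-\psi(x,y)\le 0,$$ where $\psi(x,y)=7x$ if $1\le x\le y$, $\psi(x,y)=8y-x$ if $y\le x\le 8y$, and $\psi(x,y)=0$ if $x\ge 8y$.
   Context: Positions in a list are numbered $1,\dots,n$ from the head. *)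

theory Defs
  imports Main
begin

(* 0-based index of the first occurrence of x in L (length L if absent) *)
primrec idx :: "'a list \<Rightarrow> 'a \<Rightarrow> nat" where
  "idx [] x = 0"
| "idx (a # L) x = (if a = x then 0 else Suc (idx L x))"

definition pos :: "'a list \<Rightarrow> 'a \<Rightarrow> nat" where
  "pos L x = idx L x + 1"

definition before :: "'a list \<Rightarrow> 'a \<Rightarrow> 'a \<Rightarrow> bool" where
  "before L i j \<longleftrightarrow> i \<in> set L \<and> j \<in> set L \<and> pos L i < pos L j"

definition inversions :: "'a list \<Rightarrow> 'a list \<Rightarrow> nat" where
  "inversions LA LB = card {(i, j). before LA i j \<and> before LB j i}"

definition move_to_front :: "'a \<Rightarrow> 'a list \<Rightarrow> 'a list" where
  "move_to_front e L = e # removeAll e L"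

definition psi :: "nat \<Rightarrow> nat \<Rightarrow> int" where
  "psi x y = (if 1 \<le> x \<and> x \<le> y then 7 * int x
              else if y \<le> x \<and> x \<le> 8 * y then 8 * int y - int x
              else 0)"

end

theory Submission
  imports Defs
begin

text \<open>
  Let \<open>A\<close> and \<open>B\<close> be the sets of elements preceding \<open>e\<close> in \<open>LA\<close> and in \<open>LB\<close>.
  Moving \<open>e\<close> to the front of \<open>LA\<close> only affects pairs involving \<open>e\<close>: it creates the
  inversions \<open>(e, b)\<close> with \<open>b \<in> A \<inter> B\<close> and removes the inversions \<open>(a, e)\<close> with
  \<open>a \<in> A - B\<close>.  With \<open>k = |A \<inter> B|\<close> and \<open>|A| = x - 1\<close> this gives
  \<open>\<Delta>\<phi> = 2k - (x - 1)\<close>, so \<open>3x + 4\<Delta>\<phi> = 8k - x + 4\<close>, and the claim follows from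
  \<open>k \<le> min (x - 1) (y - 1)\<close>.
\<close>

definition predecessors :: "'a list \<Rightarrow> 'a \<Rightarrow> 'a set" where
  "predecessors L e = {a. before L a e}"

definition inversion_pairs :: "'a list \<Rightarrow> 'a list \<Rightarrow> ('a \<times> 'a) set" where
  "inversion_pairs LA LB = {(i, j). before LA i j \<and> before LB j i}"

lemma idx_nth: "i \<in> set L \<Longrightarrow> idx L i < length L \<and> L ! idx L i = i"
  by (induction L) auto

lemma idx_inj: "i \<in> set L \<Longrightarrow> j \<in> set L \<Longrightarrow> idx L i = idx L j \<Longrightarrow> i = j"
  by (metis idx_nth)

lemma before_iff_idx: "before L i j \<longleftrightarrow> i \<in> set L \<and> j \<in> set L \<and> idx L i < idx L j"
  by (simp add: before_def pos_def)

lemma before_total: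
  "i \<in> set L \<Longrightarrow> j \<in> set L \<Longrightarrow> i \<noteq> j \<Longrightarrow> before L i j \<or> before L j i"
  using idx_inj[of i L j] unfolding before_iff_idx by linarith

lemma before_mem: "before L i j \<Longrightarrow> i \<in> set L \<and> j \<in> set L"
  by (simp add: before_iff_idx)

lemma before_irrefl: "\<not> before L i i"
  by (simp add: before_iff_idx)

lemma before_asym: "before L i j \<Longrightarrow> \<not> before L j i"
  by (simp add: before_iff_idx)

lemma idx_removeAll_less_iff:
  "i \<in> set L \<Longrightarrow> j \<in> set L \<Longrightarrow> i \<noteq> e \<Longrightarrow> j \<noteq> e \<Longrightarrow>
   idx (removeAll e L) i < idx (removeAll e L) j \<longleftrightarrow> idx L i < idx L j"
  by (induction L) auto

lemma before_move_to_front: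
  "before (move_to_front e L) i j \<longleftrightarrow>
     i \<in> insert e (set L) \<and> j \<in> insert e (set L) \<and> j \<noteq> e \<and> (i = e \<or> before L i j)"
proof (cases "i = e \<or> j = e")
  case True
  then show ?thesis by (auto simp: before_iff_idx move_to_front_def)
next
  case False
  then show ?thesis
    using idx_removeAll_less_iff[of i L j e] by (auto simp: before_iff_idx move_to_front_def)
qed

lemma card_predecessors:
  assumes "distinct L" and "e \<in> set L"
  shows "card (predecessors L e) = idx L e"
  using assms
proof (induction L)
  case Nil
  then show ?case by simp
next
  case (Cons b L)
  show ?case
  proof (cases "b = e")
    case True
    then show ?thesis by (simp add: predecessors_def before_iff_idx)
  next
    case False
    with Cons.prems have "e \<in> set L" and "b \<notin> set L" by auto
    then have "predecessors (b # L) e = insert b (predecessors L e)"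
      and "b \<notin> predecessors L e"
      using False by (auto simp: predecessors_def before_iff_idx)
    moreover have "finite (predecessors L e)"
      by (rule finite_subset[of _ "set L"]) (auto simp: predecessors_def before_iff_idx)
    ultimately show ?thesis
      using Cons.IH Cons.prems \<open>e \<in> set L\<close> False by simp
  qed
qed

lemma finite_inversion_pairs: "finite (inversion_pairs LA LB)"
  by (rule finite_subset[of _ "set LA \<times> set LA"])
     (auto simp: inversion_pairs_def before_iff_idx)

lemma card_add_card_Diff_swap:
  assumes "finite S" and "finite T"
  shows "card S + card (T - S) = card T + card (S - T)"
proof -
  have "card S + card (T - S) = card (S \<union> T)"
    using assms by (simp add: card_Un_disjoint[symmetric] Un_Diff_cancel)
  also have "\<dots> = card T + card (S - T)"
    using assms by (simp add: card_Un_disjoint[symmetric] Un_Diff_cancel2 Un_commute)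
  finally show ?thesis .
qed

lemma inversion_pairs_move_to_front_gained:
  assumes "set LA = set LB" and "e \<in> set LA"
  shows "inversion_pairs (move_to_front e LA) LB - inversion_pairs LA LB
           = Pair e ` (predecessors LA e \<inter> predecessors LB e)"
proof -
  have "p \<in> inversion_pairs (move_to_front e LA) LB - inversion_pairs LA LB
          \<longleftrightarrow> p \<in> Pair e ` (predecessors LA e \<inter> predecessors LB e)" for p
    using assms before_total[of e LA "snd p"] before_asym[of LA] before_asym[of LB]
      before_mem[of LA] before_mem[of LB]
    by (cases p) (auto simp: before_irrefl inversion_pairs_def predecessors_def before_move_to_front)
  then show ?thesis by blast
qed

lemma inversion_pairs_move_to_front_lost:
  assumes "set LA = set LB" and "e \<in> set LA"
  shows "inversion_pairs LA LB - inversion_pairs (move_to_front e LA) LB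
           = (\<lambda>a. (a, e)) ` (predecessors LA e - predecessors LB e)"
proof -
  have "p \<in> inversion_pairs LA LB - inversion_pairs (move_to_front e LA) LB
          \<longleftrightarrow> p \<in> (\<lambda>a. (a, e)) ` (predecessors LA e - predecessors LB e)" for p
    using assms before_total[of e LB "fst p"] before_asym[of LA] before_asym[of LB]
      before_mem[of LA] before_mem[of LB] before_irrefl[of LA e]
    by (cases p) (force simp: before_irrefl inversion_pairs_def predecessors_def before_move_to_front)
  then show ?thesis by blast
qed

lemma inversions_move_to_front:
  assumes "set LA = set LB" and "e \<in> set LA"
  shows "inversions (move_to_front e LA) LB + card (predecessors LA e - predecessors LB e)
           = inversions LA LB + card (predecessors LA e \<inter> predecessors LB e)"
proof -
  have "card (Pair e ` (predecessors LA e \<inter> predecessors LB e))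
          = card (predecessors LA e \<inter> predecessors LB e)"
    by (rule card_image) (auto simp: inj_on_def)
  moreover have "card ((\<lambda>a. (a, e)) ` (predecessors LA e - predecessors LB e))
          = card (predecessors LA e - predecessors LB e)"
    by (rule card_image) (auto simp: inj_on_def)
  ultimately show ?thesis
    using card_add_card_Diff_swap[OF finite_inversion_pairs finite_inversion_pairs,
        of "move_to_front e LA" LB LA LB]
      inversion_pairs_move_to_front_gained[OF assms]
      inversion_pairs_move_to_front_lost[OF assms]
    by (simp add: inversions_def inversion_pairs_def)
qed

lemma psi_bound:
  fixes k x y :: nat
  assumes "k < x" and "k < y"
  shows "8 * int k - int x + 4 \<le> psi x y"
  using assms by (simp add: psi_def)

theorem mainTheorem8:
  fixes LA LB :: "'a list" and E :: "'a set" and n :: nat and e :: 'a and x y :: nat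
  assumes "distinct LA" and "distinct LB"
    and "set LA = E" and "set LB = E" and "card E = n"
    and "e \<in> E"
    and "pos LA e = x"
    and "1 \<le> y" and "pos LB e \<le> y"
  shows "3 * int x + 4 * (int (inversions (move_to_front e LA) LB) - int (inversions LA LB))
           - psi x y \<le> 0"
proof -
  define A where "A = predecessors LA e"
  define B where "B = predecessors LB e"
  define k where "k = card (A \<inter> B)"
  have fin: "finite A" "finite B"
    unfolding A_def B_def predecessors_def before_iff_idx by auto
  have "card A + 1 = x" "card B + 1 \<le> y"
    using card_predecessors[of LA e] card_predecessors[of LB e] assms
    by (auto simp: A_def B_def pos_def)
  moreover have "k \<le> card A" "k \<le> card B"
    using fin by (simp_all add: k_def card_mono)
  moreover have "card (A - B) + k = card A"
    using fin by (simp add: k_def card_Diff_subset_Int Diff_Int2 card_Diff_subset card_mono)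
  moreover have "inversions (move_to_front e LA) LB + card (A - B) = inversions LA LB + k"
    using inversions_move_to_front[of LA LB e] assms by (simp add: A_def B_def k_def)
  ultimately have \<Delta>: "int (inversions (move_to_front e LA) LB) - int (inversions LA LB)
                     = 2 * int k - (int x - 1)" and "k < x" and "k < y"
    by linarith+
  from \<open>k < x\<close> \<open>k < y\<close> have "8 * int k - int x + 4 \<le> psi x y"
    by (rule psi_bound)
  then show ?thesis
    unfolding \<Delta> by (simp add: algebra_simps)
qed

end
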